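(* Let $(\Omega,\mathscr H,\mathbb E)$ be a sub-linear expectation space with $\mathbb E[X]=\sup_{P\in\mathcal P}E_P[X]$ for a family $\mathcal P$ of $\sigma$-additive probability measures, and let $\nu(A)=\inf_{P\in\mathcal P}P(A)$. Let $\{Z_l\}_{l\ge1}$ be random variables in this space and $T_n:=\sum_{l=1}^n Z_l$. Suppose there are positive constants $M_0,M_1$ such that for all $n\ge1$ and all $n_1\le n_2$: (i) $\mathbb E[T_n]\le 0$; (ii) $\mathbb E[T_n^2]\le M_0\, n+(\mathbb E[T_n])^2$ (or, alternatively, $\mathbb E[T_n^2]\le M_0\, n$); (iii) $\sum_{l=n_1}^{n_2}\mathbb E[Z_l^2]\le M_1 (n_2-n_1+1)$. Then $$\nu\Big(\limsup_{n\to\infty}\frac{T_n}{n}\le 0\Big)=1.$$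
   Context: A sub-linear expectation space $(\Omega,\mathscr H,\mathbb E)$ consists of a measurable space $(\Omega,\mathcal F)$, a linear space $\mathscr H$ of real measurable functions on $\Omega$ such that $X_1,\dots,X_n\in\mathscr H$ implies $\varphi(X_1,\dots,X_n)\in\mathscr H$ for every bounded Lipschitz $\varphi:\mathbb R^n\to\mathbb R$, and a functional $\mathbb E:\mathscr H\to\mathbb R$ that is monotone ($X\ge Y\Rightarrow \mathbb E[X]\ge\mathbb E[Y]$), constant preserving ($\mathbb E[c]=c$), sub-additive ($\mathbb E[X+Y]\le\mathbb E[X]+\mathbb E[Y]$) and positively homogeneous ($\mathbb E[\lambda X]=\lambda\mathbb E[X]$ for $\lambda\ge0$). It is assumed that $\mathbb E[X]=\sup_{P\in\mathcal P}E_P[X]$, where $E_P$ is expectation under $P$; this formula is used to evaluate $\mathbb E$ on all random variables appearing (e.g. $Z_l^2$, $T_n^2$). The upper probability is $\mathbb V(A)=\sup_{P\in\mathcal P}P(A)$ and the lower probability is $\nu(A)=\inf_{P\in\mathcal P}P(A)$ for $A\in\mathcal F$. *)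

theory Defs
  imports "HOL-Probability.Probability"
begin

definition upper_exp :: "'a measure set \<Rightarrow> ('a \<Rightarrow> real) \<Rightarrow> ereal" where
  "upper_exp Ps X = (SUP P\<in>Ps. ereal (integral\<^sup>L P X))"

text \<open>Same, for nonnegative random variables (expectation taken as the nonnegative
  Lebesgue integral, so it may be +infinity).\<close>
definition upper_exp_nn :: "'a measure set \<Rightarrow> ('a \<Rightarrow> real) \<Rightarrow> ereal" where
  "upper_exp_nn Ps X = (SUP P\<in>Ps. enn2ereal (\<integral>\<^sup>+ x. ennreal (X x) \<partial>P))"

definition lower_prob :: "'a measure set \<Rightarrow> 'a set \<Rightarrow> real" where
  "lower_prob Ps A = (INF P\<in>Ps. measure P A)"

end

theory Submission
  imports Defs "HOL-Library.Discrete_Functions"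
begin

(* Fix P in the family. Under P, conditions (i)-(iii) give E_P T_n <= 0, Var_P T_n <= M0 n
   and sum_{l=n1..n2} E_P Z_l^2 <= M1 (n2 - n1 + 1). Along the squares, Chebyshev's
   inequality and Borel-Cantelli give T_{k^2} <= e k^2 eventually, and Markov's inequality
   and Borel-Cantelli give that the sum of Z_l^2 over the block (k^2, (k+1)^2] is eventually
   at most e^2 k^3. By Cauchy-Schwarz, T_n for n in that block then exceeds T_{k^2} by at most
   2 e k^2, so limsup T_n / n <= 0 P-almost surely. As P was arbitrary, nu = 1. *)

lemma partial_block_sum_squared_le:
  fixes z :: "nat \<Rightarrow> real"
  assumes "n \<le> b"
  shows "(\<Sum>l\<in>{a<..n}. z l)^2 \<le> real (b - a) * (\<Sum>l\<in>{a<..b}. (z l)^2)"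
proof -
  have "(\<Sum>l\<in>{a<..n}. z l)^2 \<le> real (card {a<..n}) * (\<Sum>l\<in>{a<..n}. (z l)^2)"
    using sum_squared_le_sum_of_squares[of z "{a<..n}"] by (simp add: mult.commute)
  also have "\<dots> \<le> real (b - a) * (\<Sum>l\<in>{a<..b}. (z l)^2)"
    using assms by (intro mult_mono sum_mono2) (auto simp: sum_nonneg)
  finally show ?thesis .
qed

lemma eventually_partial_sum_le_if_square_blocks:
  fixes z :: "nat \<Rightarrow> real" and e :: real
  assumes "0 \<le> e"
    and squares: "\<forall>\<^sub>F k in sequentially. (\<Sum>l=1..k^2. z l) \<le> e * k^2"
    and blocks: "\<forall>\<^sub>F k in sequentially. (\<Sum>l\<in>{k^2<..(k+1)^2}. (z l)^2) \<le> e^2 * k^3"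
  shows "\<forall>\<^sub>F n in sequentially. (\<Sum>l=1..n. z l) \<le> 3 * e * n"
proof -
  obtain K where K: "\<And>k. k \<ge> K \<Longrightarrow> (\<Sum>l=1..k^2. z l) \<le> e * k^2 \<and>
      (\<Sum>l\<in>{k^2<..(k+1)^2}. (z l)^2) \<le> e^2 * k^3"
    using eventually_conj[OF squares blocks] unfolding eventually_sequentially by blast
  have "(\<Sum>l=1..n. z l) \<le> 3 * e * n" if n: "n \<ge> (K + 1)^2" for n
  proof -
    define k where "k = floor_sqrt n"
    have k_sq: "k^2 \<le> n" "n < (k+1)^2"
      using Suc_floor_sqrt_power2_gt[of n] by (simp_all add: k_def)
    have "K + 1 \<le> k" using n by (simp add: k_def le_floor_sqrt_iff)
    then have k: "k \<ge> K" "k \<ge> 1" by simp_all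
    define S where "S = (\<Sum>l\<in>{k^2<..n}. z l)"
    have "{1..n} = {1..k^2} \<union> {k^2<..n}" using k_sq by auto
    then have split: "(\<Sum>l=1..n. z l) = (\<Sum>l=1..k^2. z l) + S"
      unfolding S_def by (simp add: sum.union_disjoint ivl_disj_int)
    have "S^2 \<le> real ((k+1)^2 - k^2) * (\<Sum>l\<in>{k^2<..(k+1)^2}. (z l)^2)"
      unfolding S_def using k_sq by (intro partial_block_sum_squared_le) simp
    also have "\<dots> \<le> real ((k+1)^2 - k^2) * (e^2 * k^3)"
      using K[OF k(1)] by (intro mult_left_mono) auto
    also have "\<dots> = (2 * k + 1) * (e^2 * k^3)"
      by (simp add: power2_eq_square)
    also have "\<dots> \<le> (4 * k) * (e^2 * k^3)"
      using k by (intro mult_right_mono) auto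
    also have "\<dots> = (2 * e * k^2)^2"
      by (simp add: power2_eq_square power3_eq_cube)
    finally have "S \<le> 2 * e * k^2"
      by (rule power2_le_imp_le) (use assms(1) in auto)
    then have "(\<Sum>l=1..n. z l) \<le> 3 * e * k^2"
      using split K[OF k(1)] by simp
    also have "\<dots> \<le> 3 * e * n"
      using k_sq assms(1) by (intro mult_left_mono) (auto simp flip: of_nat_power)
    finally show ?thesis .
  qed
  then show ?thesis unfolding eventually_sequentially by blast
qed

lemma limsup_le_0_if_eventually_le:
  fixes x :: "nat \<Rightarrow> real"
  assumes "\<And>e. e > 0 \<Longrightarrow> \<forall>\<^sub>F n in sequentially. x n \<le> e"
  shows "limsup (\<lambda>n. ereal (x n)) \<le> 0"
  unfolding Limsup_le_iff
proof (intro allI impI)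
  fix y :: ereal assume "y > 0"
  then obtain e :: real where "0 < e" "e < y" using ereal_dense2 by force
  with assms[of e] show "\<forall>\<^sub>F n in sequentially. y > ereal (x n)"
    by (auto elim!: eventually_mono intro: le_less_trans[of _ "ereal e"])
qed

lemma (in prob_space) AE_eventually_less_if_summable_expectation:
  fixes f :: "nat \<Rightarrow> 'a \<Rightarrow> real" and b :: "nat \<Rightarrow> real"
  assumes int: "\<And>k. integrable M (f k)" and nonneg: "\<And>k x. x \<in> space M \<Longrightarrow> 0 \<le> f k x"
    and b_pos: "\<And>k. b k > 0" and summable: "summable (\<lambda>k. expectation (f k) / b k)"
  shows "AE x in M. \<forall>\<^sub>F k in sequentially. f k x < b k"
proof -
  define A where "A k = {x \<in> space M. b k \<le> f k x}" for k
  have [measurable]: "f k \<in> borel_measurable M" for k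
    using int by blast
  have A_sets: "A k \<in> events" for k
    unfolding A_def by measurable
  have "measure M (A k) \<le> expectation (f k) / b k" for k
    unfolding A_def using int nonneg b_pos by (intro integral_Markov_inequality_measure) auto
  then have "summable (\<lambda>k. measure M (A k))"
    by (intro summable_comparison_test[OF _ summable]) auto
  then have "AE x in M. \<forall>\<^sub>F k in sequentially. x \<in> space M - A k"
    using A_sets by (intro borel_cantelli_AE1) (auto simp: less_top[symmetric])
  then show ?thesis
    by (auto simp: A_def not_le elim!: eventually_mono)
qed

lemma (in prob_space) AE_eventually_less_if_summable_variance:
  fixes Y :: "nat \<Rightarrow> 'a \<Rightarrow> real" and b :: "nat \<Rightarrow> real"
  assumes [measurable]: "\<And>k. Y k \<in> borel_measurable M"
    and square_int: "\<And>k. integrable M (\<lambda>x. (Y k x)^2)"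
    and mean: "\<And>k. expectation (Y k) \<le> 0"
    and b_pos: "\<And>k. b k > 0" and summable: "summable (\<lambda>k. variance (Y k) / (b k)^2)"
  shows "AE x in M. \<forall>\<^sub>F k in sequentially. Y k x < b k"
proof -
  have b_ne: "b k \<noteq> 0" for k
    using b_pos[of k] by simp
  have "integrable M (\<lambda>x. (Y k x - expectation (Y k))^2)" for k
    using square_int[of k] square_integrable_imp_integrable[OF _ square_int[of k]]
    by (simp add: power2_diff)
  then have "AE x in M. \<forall>\<^sub>F k in sequentially. (Y k x - expectation (Y k))^2 < (b k)^2"
    using b_pos summable by (intro AE_eventually_less_if_summable_expectation) (auto simp: b_ne)
  moreover have "Y k x < b k" if "(Y k x - expectation (Y k))^2 < (b k)^2" for k x
    using power2_less_imp_less[OF that] b_pos[of k] mean[of k] by simp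
  ultimately show ?thesis
    by (auto elim!: eventually_mono)
qed

lemma summable_divide_Suc_power2: "summable (\<lambda>k. c / (Suc k)^2 :: real)"
proof -
  have "summable (\<lambda>k. inverse (real (Suc k)^2))"
    by (subst summable_Suc_iff) (rule inverse_power_summable, simp)
  then show ?thesis
    using summable_mult[of _ c] by (simp add: divide_inverse)
qed

lemma (in prob_space) AE_eventually_le_at_squares:
  fixes X :: "nat \<Rightarrow> 'a \<Rightarrow> real" and c e :: real
  assumes [measurable]: "\<And>n. X n \<in> borel_measurable M"
    and square_int: "\<And>n. n \<ge> 1 \<Longrightarrow> integrable M (\<lambda>x. (X n x)^2)"
    and mean: "\<And>n. n \<ge> 1 \<Longrightarrow> expectation (X n) \<le> 0"
    and var: "\<And>n. n \<ge> 1 \<Longrightarrow> variance (X n) \<le> c * n"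
    and "e > 0"
  shows "AE x in M. \<forall>\<^sub>F k in sequentially. X (k^2) x \<le> e * k^2"
proof -
  have bound: "norm (variance (X ((Suc k)^2)) / (e * (Suc k)^2)^2) \<le> c / e^2 / (Suc k)^2" for k
  proof -
    have "variance (X ((Suc k)^2)) / (e * (Suc k)^2)^2 \<le> c * (Suc k)^2 / (e * (Suc k)^2)^2"
      using var[of "(Suc k)^2"] by (intro divide_right_mono) auto
    also have "\<dots> = c / e^2 / (Suc k)^2"
    proof -
      have "c * s / (e * s)^2 = c / e^2 / s" if "s \<noteq> 0" for s :: real
        using that \<open>e > 0\<close> by (simp add: power2_eq_square field_simps)
      then show ?thesis by simp
    qed
    finally show ?thesis
      using variance_positive[of "X ((Suc k)^2)"] by simp
  qed
  have "summable (\<lambda>k. variance (X ((Suc k)^2)) / (e * (Suc k)^2)^2)"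
    using summable_divide_Suc_power2[of "c / e^2"] bound by (rule summable_comparison_test')
  then have "AE x in M. \<forall>\<^sub>F k in sequentially. X ((Suc k)^2) x < e * (Suc k)^2"
    using square_int mean \<open>e > 0\<close>
    by (intro AE_eventually_less_if_summable_variance) simp_all
  then show ?thesis
  proof (rule eventually_mono)
    fix x assume "\<forall>\<^sub>F k in sequentially. X ((Suc k)^2) x < e * (Suc k)^2"
    then have "\<forall>\<^sub>F k in sequentially. X ((Suc k)^2) x \<le> e * (Suc k)^2"
      by (auto elim: eventually_mono)
    then show "\<forall>\<^sub>F k in sequentially. X (k^2) x \<le> e * k^2"
      using eventually_sequentially_Suc[of "\<lambda>k. X (k^2) x \<le> e * k^2"] by simp
  qed
qed

lemma (in prob_space) AE_eventually_block_sums_of_squares_le: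
  fixes Z :: "nat \<Rightarrow> 'a \<Rightarrow> real" and c e :: real
  assumes [measurable]: "\<And>l. Z l \<in> borel_measurable M"
    and square_int: "\<And>l. l \<ge> 1 \<Longrightarrow> integrable M (\<lambda>x. (Z l x)^2)"
    and block: "\<And>n1 n2. 1 \<le> n1 \<Longrightarrow> n1 \<le> n2 \<Longrightarrow>
      (\<Sum>l=n1..n2. expectation (\<lambda>x. (Z l x)^2)) \<le> c * real (n2 - n1 + 1)"
    and "e > 0"
  shows "AE x in M. \<forall>\<^sub>F k in sequentially. (\<Sum>l\<in>{k^2<..(k+1)^2}. (Z l x)^2) \<le> e^2 * k^3"
proof -
  define D where "D k x = (\<Sum>l\<in>{(Suc k)^2<..(Suc k + 1)^2}. (Z l x)^2)" for k x
  have D_int: "integrable M (D k)" for k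
    unfolding D_def by (intro Bochner_Integration.integrable_sum square_int) auto
  have D_nonneg: "0 \<le> D k x" for k x
    unfolding D_def by (simp add: sum_nonneg)
  have bound: "norm (expectation (D k) / (e^2 * (Suc k)^3)) \<le> 3 * c / e^2 / (Suc k)^2" for k
  proof -
    have block_ivl: "{(Suc k)^2<..(Suc k + 1)^2} = {Suc ((Suc k)^2)..(Suc k + 1)^2}"
      by auto
    have "expectation (D k) = (\<Sum>l\<in>{(Suc k)^2<..(Suc k + 1)^2}. expectation (\<lambda>x. (Z l x)^2))"
      unfolding D_def by (intro Bochner_Integration.integral_sum square_int) auto
    also have "\<dots> \<le> c * (2 * Suc k + 1)"
      unfolding block_ivl using block[of "Suc ((Suc k)^2)" "(Suc k + 1)^2"]
      by (simp add: power2_eq_square)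
    finally have E_le: "expectation (D k) \<le> c * (2 * Suc k + 1)" .
    have E_nonneg: "0 \<le> expectation (D k)"
      using D_nonneg by (intro integral_nonneg_AE) simp
    then have "0 \<le> c * (2 * Suc k + 1)"
      using E_le by linarith
    then have "0 \<le> c"
      by (simp add: zero_le_mult_iff add_pos_pos)
    then have "c * (2 * Suc k + 1) \<le> c * (3 * Suc k)"
      by (intro mult_left_mono) auto
    then have "expectation (D k) \<le> c * (3 * Suc k)"
      using E_le by linarith
    then have "expectation (D k) / (e^2 * (Suc k)^3) \<le> c * (3 * Suc k) / (e^2 * (Suc k)^3)"
      by (intro divide_right_mono) auto
    also have "\<dots> = 3 * c / e^2 / (Suc k)^2"
    proof -
      have "c * (3 * s) / (e^2 * s^3) = 3 * c / e^2 / s^2" if "s \<noteq> 0" for s :: real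
        using that \<open>e > 0\<close> by (simp add: power2_eq_square power3_eq_cube field_simps)
      from this[of "Suc k"] show ?thesis by simp
    qed
    finally show ?thesis
      using E_nonneg by simp
  qed
  have "summable (\<lambda>k. expectation (D k) / (e^2 * (Suc k)^3))"
    using summable_divide_Suc_power2[of "3 * c / e^2"] bound by (rule summable_comparison_test')
  then have "AE x in M. \<forall>\<^sub>F k in sequentially. D k x < e^2 * (Suc k)^3"
    using D_int D_nonneg \<open>e > 0\<close> by (intro AE_eventually_less_if_summable_expectation) auto
  then show ?thesis
  proof (rule eventually_mono)
    fix x assume "\<forall>\<^sub>F k in sequentially. D k x < e^2 * (Suc k)^3"
    then have "\<forall>\<^sub>F k in sequentially. D k x \<le> e^2 * (Suc k)^3"
      by (auto elim: eventually_mono)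
    then show "\<forall>\<^sub>F k in sequentially. (\<Sum>l\<in>{k^2<..(k+1)^2}. (Z l x)^2) \<le> e^2 * k^3"
      using eventually_sequentially_Suc[of "\<lambda>k. (\<Sum>l\<in>{k^2<..(k+1)^2}. (Z l x)^2) \<le> e^2 * k^3"]
      by (simp add: D_def)
  qed
qed

lemma borel_measurable_partial_sums:
  fixes Z T :: "nat \<Rightarrow> 'a \<Rightarrow> real"
  assumes "\<And>n x. T n x = (\<Sum>l=1..n. Z l x)" "\<And>l. Z l \<in> borel_measurable M"
  shows "T n \<in> borel_measurable M"
proof -
  have "T n = (\<lambda>x. \<Sum>l=1..n. Z l x)"
    using assms(1) by auto
  then show ?thesis
    using assms(2) by simp
qed

lemma (in prob_space) AE_limsup_average_le_0:
  fixes Z T :: "nat \<Rightarrow> 'a \<Rightarrow> real" and a b :: real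
  assumes [measurable]: "\<And>l. Z l \<in> borel_measurable M"
    and T_def: "\<And>n x. T n x = (\<Sum>l=1..n. Z l x)"
    and T_square_int: "\<And>n. n \<ge> 1 \<Longrightarrow> integrable M (\<lambda>x. (T n x)^2)"
    and mean: "\<And>n. n \<ge> 1 \<Longrightarrow> expectation (T n) \<le> 0"
    and var: "\<And>n. n \<ge> 1 \<Longrightarrow> variance (T n) \<le> a * n"
    and Z_square_int: "\<And>l. l \<ge> 1 \<Longrightarrow> integrable M (\<lambda>x. (Z l x)^2)"
    and block: "\<And>n1 n2. 1 \<le> n1 \<Longrightarrow> n1 \<le> n2 \<Longrightarrow>
      (\<Sum>l=n1..n2. expectation (\<lambda>x. (Z l x)^2)) \<le> b * real (n2 - n1 + 1)"
  shows "AE x in M. limsup (\<lambda>n. ereal (T n x / n)) \<le> 0"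
proof -
  have [measurable]: "T n \<in> borel_measurable M" for n
    using T_def by (rule borel_measurable_partial_sums) measurable
  have AE_le: "AE x in M. \<forall>\<^sub>F n in sequentially. T n x \<le> e * n" if "e > 0" for e :: real
  proof -
    have "AE x in M. \<forall>\<^sub>F k in sequentially. T (k^2) x \<le> e / 3 * k^2"
      using T_square_int mean var \<open>e > 0\<close> by (intro AE_eventually_le_at_squares) auto
    moreover have "AE x in M. \<forall>\<^sub>F k in sequentially.
        (\<Sum>l\<in>{k^2<..(k+1)^2}. (Z l x)^2) \<le> (e / 3)^2 * k^3"
      using Z_square_int block \<open>e > 0\<close> by (intro AE_eventually_block_sums_of_squares_le) auto
    ultimately show ?thesis
    proof eventually_elim
      case (elim x)
      then show ?case
        using eventually_partial_sum_le_if_square_blocks[of "e / 3" "\<lambda>l. Z l x"] \<open>e > 0\<close>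
        by (simp add: T_def)
    qed
  qed
  have "AE x in M. \<forall>j. \<forall>\<^sub>F n in sequentially. T n x \<le> inverse (Suc j) * n"
    unfolding AE_all_countable by (intro allI AE_le) simp
  then show ?thesis
  proof (rule eventually_mono)
    fix x assume le: "\<forall>j. \<forall>\<^sub>F n in sequentially. T n x \<le> inverse (Suc j) * n"
    show "limsup (\<lambda>n. ereal (T n x / n)) \<le> 0"
    proof (rule limsup_le_0_if_eventually_le)
      fix e :: real assume "e > 0"
      then obtain j where j: "inverse (Suc j) < e"
        using ex_inverse_of_nat_less[OF \<open>e > 0\<close>] by (metis Suc_pred)
      show "\<forall>\<^sub>F n in sequentially. T n x / n \<le> e"
        using eventually_conj[OF le[rule_format, of j] eventually_gt_at_top[of 0]]
      proof eventually_elim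
        case (elim n)
        then have "T n x / n \<le> inverse (Suc j)"
          by (simp add: divide_le_eq)
        with j show ?case by simp
      qed
    qed
  qed
qed

lemma expectation_le_upper_exp:
  "P \<in> Ps \<Longrightarrow> ereal (integral\<^sup>L P X) \<le> upper_exp Ps X"
  unfolding upper_exp_def by (rule SUP_upper)

lemma integral_le_upper_exp_nn:
  fixes f :: "'a \<Rightarrow> real"
  assumes "P \<in> Ps" "integrable P f" "\<And>x. 0 \<le> f x"
  shows "ereal (integral\<^sup>L P f) \<le> upper_exp_nn Ps f"
proof -
  have "(\<integral>\<^sup>+ x. ennreal (f x) \<partial>P) = ennreal (integral\<^sup>L P f)"
    using assms by (intro nn_integral_eq_integral) auto
  moreover have "enn2ereal (\<integral>\<^sup>+ x. ennreal (f x) \<partial>P) \<le> upper_exp_nn Ps f"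
    unfolding upper_exp_nn_def using assms(1) by (rule SUP_upper)
  ultimately show ?thesis
    using assms by (simp add: integral_nonneg enn2ereal_ennreal)
qed

lemma integrable_if_upper_exp_nn_le:
  fixes f :: "'a \<Rightarrow> real"
  assumes "P \<in> Ps" "f \<in> borel_measurable P" "\<And>x. 0 \<le> f x" "upper_exp_nn Ps f \<le> ereal c"
  shows "integrable P f"
proof (rule integrableI_bounded)
  have "enn2ereal (\<integral>\<^sup>+ x. ennreal (f x) \<partial>P) \<le> ereal c"
    using assms unfolding upper_exp_nn_def by (metis SUP_upper order.trans)
  then have "(\<integral>\<^sup>+ x. ennreal (f x) \<partial>P) \<noteq> \<top>"
    by auto
  then show "(\<integral>\<^sup>+ x. ennreal (norm (f x)) \<partial>P) < \<infinity>"
    using assms(3) by (simp add: less_top)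
qed fact

lemma (in prob_space) AE_limsup_average_le_0_if_upper_bounds:
  fixes Ps :: "'a measure set" and Z T :: "nat \<Rightarrow> 'a \<Rightarrow> real" and M0 M1 :: real
  assumes "M \<in> Ps" and Z_meas[measurable]: "\<And>l. Z l \<in> borel_measurable M"
    and T_def: "\<And>n x. T n x = (\<Sum>l=1..n. Z l x)"
    and mean: "\<And>n. n \<ge> 1 \<Longrightarrow> upper_exp Ps (T n) \<le> 0"
    and second_moment: "\<And>n. n \<ge> 1 \<Longrightarrow>
        upper_exp_nn Ps (\<lambda>x. (T n x)^2) \<le> ereal (M0 * real n) + (upper_exp Ps (T n))^2"
    and block: "\<And>n1 n2. 1 \<le> n1 \<Longrightarrow> n1 \<le> n2 \<Longrightarrow>
        (\<Sum>l=n1..n2. upper_exp_nn Ps (\<lambda>x. (Z l x)^2)) \<le> ereal (M1 * real (n2 - n1 + 1))"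
  shows "AE x in M. limsup (\<lambda>n. ereal (T n x / real n)) \<le> 0"
proof -
  have [measurable]: "T n \<in> borel_measurable M" for n
    using T_def by (rule borel_measurable_partial_sums) measurable
  have Z_square_int: "integrable M (\<lambda>x. (Z l x)^2)" if "l \<ge> 1" for l
    using block[of l l] that \<open>M \<in> Ps\<close> by (intro integrable_if_upper_exp_nn_le) auto
  have Z_block: "(\<Sum>l=n1..n2. expectation (\<lambda>x. (Z l x)^2)) \<le> M1 * real (n2 - n1 + 1)"
    if "1 \<le> n1" "n1 \<le> n2" for n1 n2
  proof -
    have "ereal (\<Sum>l=n1..n2. expectation (\<lambda>x. (Z l x)^2))
        = (\<Sum>l=n1..n2. ereal (expectation (\<lambda>x. (Z l x)^2)))"
      by (simp add: sum_ereal)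
    also have "\<dots> \<le> (\<Sum>l=n1..n2. upper_exp_nn Ps (\<lambda>x. (Z l x)^2))"
      using that \<open>M \<in> Ps\<close> Z_square_int by (intro sum_mono integral_le_upper_exp_nn) auto
    also have "\<dots> \<le> ereal (M1 * real (n2 - n1 + 1))"
      using block that .
    finally show ?thesis by simp
  qed
  have T_moments: "integrable M (\<lambda>x. (T n x)^2) \<and> expectation (T n) \<le> 0 \<and>
      variance (T n) \<le> M0 * n" if n: "n \<ge> 1" for n
  proof -
    obtain r where r: "upper_exp Ps (T n) = ereal r"
      using expectation_le_upper_exp[OF \<open>M \<in> Ps\<close>, of "T n"] mean[OF n]
      by (cases "upper_exp Ps (T n)") auto
    have mean_le: "expectation (T n) \<le> r" "r \<le> 0"
      using expectation_le_upper_exp[OF \<open>M \<in> Ps\<close>, of "T n"] mean[OF n] r by auto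
    have bound: "upper_exp_nn Ps (\<lambda>x. (T n x)^2) \<le> ereal (M0 * n + r^2)"
      using second_moment[OF n] r by (simp add: power2_eq_square)
    have T_square_int: "integrable M (\<lambda>x. (T n x)^2)"
      using \<open>M \<in> Ps\<close> bound by (intro integrable_if_upper_exp_nn_le) auto
    have second_moment_le: "expectation (\<lambda>x. (T n x)^2) \<le> M0 * n + r^2"
      using order.trans[OF integral_le_upper_exp_nn[OF \<open>M \<in> Ps\<close> T_square_int] bound] by simp
    have "r^2 \<le> (expectation (T n))^2"
      using power_mono[of "-r" "-expectation (T n)" 2] mean_le by simp
    moreover have "variance (T n) = expectation (\<lambda>x. (T n x)^2) - (expectation (T n))^2"
      using T_square_int square_integrable_imp_integrable[OF _ T_square_int] by (simp add: variance_eq)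
    ultimately have "variance (T n) \<le> M0 * n"
      using second_moment_le by linarith
    with T_square_int mean_le show ?thesis
      by linarith
  qed
  show ?thesis
    using T_moments Z_square_int Z_block
    by (intro AE_limsup_average_le_0[where a = M0 and b = M1, OF Z_meas T_def]) auto
qed

theorem theorem3p1:
  fixes M :: "'a measure" and Ps :: "'a measure set"
    and Z :: "nat \<Rightarrow> 'a \<Rightarrow> real" and T :: "nat \<Rightarrow> 'a \<Rightarrow> real"
    and M0 M1 :: real
  assumes Ps_ne: "Ps \<noteq> {}"
    and Ps_prob: "\<And>P. P \<in> Ps \<Longrightarrow> prob_space P \<and> sets P = sets M"
    and Z_meas: "\<And>l. Z l \<in> borel_measurable M"
    and T_def: "\<And>n x. T n x = (\<Sum>l=1..n. Z l x)"
    and M0_pos: "M0 > 0" and M1_pos: "M1 > 0"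
    and cond_i: "\<And>n. n \<ge> 1 \<Longrightarrow> upper_exp Ps (T n) \<le> 0"
    and cond_ii: "\<And>n. n \<ge> 1 \<Longrightarrow>
        upper_exp_nn Ps (\<lambda>x. (T n x)^2) \<le> ereal (M0 * real n) + (upper_exp Ps (T n))^2"
    and cond_iii: "\<And>n1 n2. 1 \<le> n1 \<Longrightarrow> n1 \<le> n2 \<Longrightarrow>
        (\<Sum>l=n1..n2. upper_exp_nn Ps (\<lambda>x. (Z l x)^2)) \<le> ereal (M1 * real (n2 - n1 + 1))"
  shows "lower_prob Ps {x \<in> space M. limsup (\<lambda>n. ereal (T n x / real n)) \<le> 0} = 1"
proof -
  define S where "S = {x \<in> space M. limsup (\<lambda>n. ereal (T n x / real n)) \<le> 0}"
  have [measurable]: "T n \<in> borel_measurable M" for n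
    using T_def Z_meas by (rule borel_measurable_partial_sums)
  have "S \<in> sets M"
    unfolding S_def by measurable
  have "measure P S = 1" if "P \<in> Ps" for P
  proof -
    interpret prob_space P
      using Ps_prob that by simp
    have sets_eq: "sets P = sets M"
      using Ps_prob that by simp
    have "AE x in P. limsup (\<lambda>n. ereal (T n x / real n)) \<le> 0"
      using Z_meas measurable_cong_sets[OF sets_eq]
      by (intro AE_limsup_average_le_0_if_upper_bounds[OF that _ T_def cond_i cond_ii cond_iii]) auto
    moreover have "S = {x \<in> space P. limsup (\<lambda>n. ereal (T n x / real n)) \<le> 0}"
      unfolding S_def sets_eq_imp_space_eq[OF sets_eq] ..
    ultimately show ?thesis
      using \<open>S \<in> sets M\<close> sets_eq by (simp add: prob_Collect_eq_1)
  qed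
  then have "lower_prob Ps S = (INF P\<in>Ps. 1)"
    unfolding lower_prob_def by (intro INF_cong) auto
  then show ?thesis
    using Ps_ne by (simp add: S_def)
qed

end
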